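(* Let $\mathcal{M}=\langle S,A,T,r,c,\gamma,\mu_0,\bar\delta\rangle$ be a deterministic CMDP (deterministic transitions, starting state $s_0$) with cost budget $\bar\delta\ge V_C^*(s_0)$, and let $\bar{\mathcal{M}}_D(\mathcal{M})$ be its direct budget-tracking budget-adaptive MDP. Then: (1) any policy $\pi\in\Pi_P$ induces trajectories that start in and remain entirely within the feasible subspace $\bar S_P$; (2) any deterministic policy $\pi$ satisfying the CMDP cost constraint $\sum_{t=0}^\infty\gamma^tc(s_t,a_t)\le\bar\delta$ (along its induced trajectory) belongs to $\Pi_P$; (3) conversely, if $\pi\in\Pi_P$, then $\pi$ satisfies the cumulative cost constraint $\sum_{t=0}^\infty\gamma^t c(s_t,a_t)\le\bar\delta$ of $\mathcal{M}$. Consequently, in deterministic environments it suffices to enforce $\pi\in\Pi_P$ instead of explicitly enforcing the cumulative cost constraint.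
   Context: A CMDP $\mathcal{M}=\langle S,A,T,r,c,\gamma,\mu_0,\bar\delta\rangle$ has state space $S$, action space $A$, transition kernel $T$, reward $r$, cost $c:S\times A\to\mathbb{R}^+$ bounded by $c_{\max}$, discount $\gamma\in[0,1)$, initial distribution $\mu_0$ and cost threshold $\bar\delta$. Optimal cost values: $V_C^*(s)=\min_\pi\mathbb{E}_{\pi,s_0=s}[\sum_{t\ge0}\gamma^tc(s_t,a_t)]$, $Q_C^*(s,a)=\min_\pi\mathbb{E}_{\pi,s_0=s,a_0=a}[\sum_{t\ge0}\gamma^tc(s_t,a_t)]$. Persistent safe action set $A_P(s,\delta)=\{a:Q_C^*(s,a)\le\delta\}$; feasible subspace $\bar S_P=\{(s,\delta):\delta\in\mathbb{R}^+,\ V_C^*(s)\le\delta\}$. A budget-adaptive MDP built from $\mathcal{M}$ with $f:S\times\mathbb{R}^+\to\mathbb{R}^+$ and $g:S\times A\times S\times\mathbb{R}^+\to\mathbb{R}^+$ has augmented states $(s,\delta)\in S\times\mathbb{R}^+$, the same actions, reward and cost as $\mathcal{M}$ (not depending on $\delta$), initial augmented state $(s_0,f(s_0,\bar\delta))$ with $s_0\sim\mu_0$, and transitions $\bar T((s',\delta')\mid(s,\delta),a)=T(s'\mid s,a)\mathbf{1}\{\delta'=g(s,a,s',\delta)\}$. The direct budget-tracking BAMDP $\bar{\mathcal{M}}_D$ uses $f(s_0,\bar\delta)=\bar\delta$ and $g(s,a,s',\delta)=\frac{\delta-c(s,a)}{\gamma}$. The budget-restricted policy set $\Pi_P$ consists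 of policies $\pi$ on augmented states $(s,\delta)$ with $\pi(a\mid(s,\delta))>0\implies a\in A_P(s,\delta)$.
   Formalization: Membership in $\Pi_P$ requires $a\in A_P(s,\delta)$ for positive-probability actions only at augmented states on trajectories of $\pi$ from $(s_0,\bar\delta)$, not at every $(s,\delta)$, and the discount satisfies $\gamma>0$. The statement above fails without it. *)

theory Defs
  imports "HOL-Analysis.Analysis" "HOL-Probability.Probability_Mass_Function"
begin

fun run :: "('s \<Rightarrow> 'a \<Rightarrow> 's) \<Rightarrow> 's \<Rightarrow> (nat \<Rightarrow> 'a) \<Rightarrow> nat \<Rightarrow> 's" where
  "run step s as 0 = s"
| "run step s as (Suc n) = step (run step s as n) (as n)"

definition cum_cost :: "real \<Rightarrow> ('s \<Rightarrow> 'a \<Rightarrow> real) \<Rightarrow> (nat \<Rightarrow> 's) \<Rightarrow> (nat \<Rightarrow> 'a) \<Rightarrow> real" where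
  "cum_cost gam c ss as = (\<Sum>t. gam ^ t * c (ss t) (as t))"

text \<open>Optimal cost values (deterministic environment: optimisation over action sequences).\<close>
definition VC :: "('s \<Rightarrow> 'a \<Rightarrow> 's) \<Rightarrow> ('s \<Rightarrow> 'a \<Rightarrow> real) \<Rightarrow> real \<Rightarrow> 's \<Rightarrow> real" where
  "VC step c gam s = (INF as. cum_cost gam c (run step s as) as)"

definition QC :: "('s \<Rightarrow> 'a \<Rightarrow> 's) \<Rightarrow> ('s \<Rightarrow> 'a \<Rightarrow> real) \<Rightarrow> real \<Rightarrow> 's \<Rightarrow> 'a \<Rightarrow> real" where
  "QC step c gam s a = (INF as \<in> {as. as 0 = a}. cum_cost gam c (run step s as) as)"

definition A_P :: "('s \<Rightarrow> 'a \<Rightarrow> 's) \<Rightarrow> ('s \<Rightarrow> 'a \<Rightarrow> real) \<Rightarrow> real \<Rightarrow> 's \<Rightarrow> real \<Rightarrow> 'a set" where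
  "A_P step c gam s d = {a. QC step c gam s a \<le> d}"

definition S_P :: "('s \<Rightarrow> 'a \<Rightarrow> 's) \<Rightarrow> ('s \<Rightarrow> 'a \<Rightarrow> real) \<Rightarrow> real \<Rightarrow> ('s \<times> real) set" where
  "S_P step c gam = {(s, d). 0 \<le> d \<and> VC step c gam s \<le> d}"

definition bamdp_traj ::
  "('s \<Rightarrow> 'a \<Rightarrow> 's) \<Rightarrow> ('s \<Rightarrow> 'a \<Rightarrow> real) \<Rightarrow> real \<Rightarrow> 's \<Rightarrow> real \<Rightarrow>
   ('s \<times> real \<Rightarrow> 'a pmf) \<Rightarrow> (nat \<Rightarrow> 's) \<Rightarrow> (nat \<Rightarrow> real) \<Rightarrow> (nat \<Rightarrow> 'a) \<Rightarrow> bool" where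
  "bamdp_traj step c gam s0 dbar pol ss ds as \<longleftrightarrow>
     ss 0 = s0 \<and> ds 0 = dbar \<and>
     (\<forall>t. pmf (pol (ss t, ds t)) (as t) > 0 \<and>
          ss (Suc t) = step (ss t) (as t) \<and>
          ds (Suc t) = (ds t - c (ss t) (as t)) / gam)"

definition in_Pi_P ::
  "('s \<Rightarrow> 'a \<Rightarrow> 's) \<Rightarrow> ('s \<Rightarrow> 'a \<Rightarrow> real) \<Rightarrow> real \<Rightarrow> 's \<Rightarrow> real \<Rightarrow>
   ('s \<times> real \<Rightarrow> 'a pmf) \<Rightarrow> bool" where
  "in_Pi_P step c gam s0 dbar pol \<longleftrightarrow>
     (\<forall>ss ds as t a. bamdp_traj step c gam s0 dbar pol ss ds as \<longrightarrow>
        pmf (pol (ss t, ds t)) a > 0 \<longrightarrow> a \<in> A_P step c gam (ss t) (ds t))"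

end

theory Submission
  imports Defs
begin

text \<open>The budget update of the direct budget-tracking BAMDP keeps the invariant
  \<open>dbar = (\<Sum>k<t. gam^k c\<^sub>k) + gam^t ds\<^sub>t\<close>: the budget \<open>ds t\<close> is exactly what remains of \<open>dbar\<close>,
  rescaled to time \<open>t\<close>. The Bellman inequality \<open>c s a + gam V\<^sub>C(step s a) \<le> Q\<^sub>C(s, a)\<close> turns
  a persistent safe action at time \<open>t\<close> into feasibility at time \<open>t + 1\<close>, so budgets stay
  nonnegative and the partial costs never exceed \<open>dbar\<close>. Conversely, if the whole trajectory
  meets the constraint, its tail from time \<open>t\<close> costs at most \<open>ds t\<close> and starts with \<open>as t\<close>, so
  \<open>as t\<close> is persistently safe; for a deterministic policy this tail is the only one to check.\<close>

lemma summable_discounted: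
  fixes gam B :: real
  assumes "\<bar>gam\<bar> < 1" "\<And>t. \<bar>C t\<bar> \<le> B"
  shows "summable (\<lambda>t. gam ^ t * C t)"
proof (rule summable_comparison_test)
  show "\<exists>N. \<forall>n\<ge>N. norm (gam ^ n * C n) \<le> \<bar>gam\<bar> ^ n * B"
    using assms(2) by (auto simp: abs_mult power_abs intro!: exI[of _ 0] mult_left_mono)
  show "summable (\<lambda>t. \<bar>gam\<bar> ^ t * B)"
    using assms(1) by (intro summable_mult2 summable_geometric) simp
qed

lemma suminf_discounted_split:
  fixes gam :: real
  assumes "summable (\<lambda>t. gam ^ t * C t)" "gam \<noteq> 0"
  shows "(\<Sum>t. gam ^ t * C t) = (\<Sum>k<n. gam ^ k * C k) + gam ^ n * (\<Sum>t. gam ^ t * C (t + n))"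
proof -
  have "summable (\<lambda>t. gam ^ (t + n) * C (t + n))"
    using summable_ignore_initial_segment[OF assms(1), of n] by simp
  then have "summable (\<lambda>t. inverse (gam ^ n) * (gam ^ (t + n) * C (t + n)))"
    by (rule summable_mult)
  then have tail: "summable (\<lambda>t. gam ^ t * C (t + n))"
    using assms(2) by (simp add: power_add field_simps)
  have "(\<Sum>t. gam ^ t * C t) = (\<Sum>t. gam ^ n * (gam ^ t * C (t + n))) + (\<Sum>k<n. gam ^ k * C k)"
    using suminf_split_initial_segment[OF assms(1), of n] by (simp add: power_add mult_ac)
  also have "(\<Sum>t. gam ^ n * (gam ^ t * C (t + n))) = gam ^ n * (\<Sum>t. gam ^ t * C (t + n))"
    using suminf_mult[OF tail] .
  finally show ?thesis by simp
qed

lemma run_add: "run step s as (k + n) = run step (run step s as k) (\<lambda>i. as (k + i)) n"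
  by (induction n) auto

lemma bamdp_traj_run:
  assumes "bamdp_traj step c gam s0 dbar pol ss ds as"
  shows "ss n = run step s0 as n"
  using assms unfolding bamdp_traj_def by (induction n) auto

lemma bamdp_traj_budget:
  assumes "bamdp_traj step c gam s0 dbar pol ss ds as" "gam \<noteq> 0"
  shows "dbar = (\<Sum>k<n. gam ^ k * c (ss k) (as k)) + gam ^ n * ds n"
proof (induction n)
  case 0
  then show ?case using assms(1) unfolding bamdp_traj_def by simp
next
  case (Suc n)
  have "gam ^ Suc n * ds (Suc n) = gam ^ n * (ds n - c (ss n) (as n))"
    using assms unfolding bamdp_traj_def by simp
  then show ?case using Suc by (simp add: algebra_simps)
qed

lemma pmf_return_pos_iff: "0 < pmf (return_pmf x) a \<longleftrightarrow> a = x"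
  by (cases "a = x") simp_all

lemma bamdp_traj_return_pmf_actions:
  assumes "bamdp_traj step c gam s0 dbar (\<lambda>x. return_pmf (pol x)) ss ds as"
  shows "as t = pol (ss t, ds t)"
proof -
  have "0 < pmf (return_pmf (pol (ss t, ds t))) (as t)"
    using assms unfolding bamdp_traj_def by blast
  then show ?thesis by (simp only: pmf_return_pos_iff)
qed

lemma bamdp_traj_return_pmf_unique:
  assumes traj: "bamdp_traj step c gam s0 dbar (\<lambda>x. return_pmf (pol x)) ss ds as"
    and traj': "bamdp_traj step c gam s0 dbar (\<lambda>x. return_pmf (pol x)) ss' ds' as'"
  shows "ss' = ss \<and> ds' = ds"
proof -
  have "ss' n = ss n \<and> ds' n = ds n" for n
  proof (induction n)
    case 0
    then show ?case using assms unfolding bamdp_traj_def by simp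
  next
    case (Suc n)
    then have "as' n = as n"
      using bamdp_traj_return_pmf_actions[OF traj] bamdp_traj_return_pmf_actions[OF traj'] by simp
    then show ?case using Suc assms unfolding bamdp_traj_def by simp
  qed
  then show ?thesis by auto
qed

locale discounted_cmdp =
  fixes step :: "'s \<Rightarrow> 'a \<Rightarrow> 's" and c :: "'s \<Rightarrow> 'a \<Rightarrow> real" and gam cmax :: real
  assumes gam_pos: "0 < gam" and gam_less_1: "gam < 1"
    and cost_bounds: "\<And>s a. 0 \<le> c s a \<and> c s a \<le> cmax"
begin

lemma summable_cost: "summable (\<lambda>t. gam ^ t * c (ss t) (as t))"
  using gam_pos gam_less_1 cost_bounds by (intro summable_discounted[where B = cmax]) auto

lemma cum_cost_nonneg: "0 \<le> cum_cost gam c ss as"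
  unfolding cum_cost_def using summable_cost gam_pos cost_bounds by (intro suminf_nonneg) auto

lemma cum_cost_run_split:
  "cum_cost gam c (run step s as) as =
     (\<Sum>k<n. gam ^ k * c (run step s as k) (as k))
     + gam ^ n * cum_cost gam c (run step (run step s as n) (\<lambda>i. as (n + i))) (\<lambda>i. as (n + i))"
proof -
  have tail: "(\<Sum>t. gam ^ t * c (run step s as (t + n)) (as (t + n))) =
      cum_cost gam c (run step (run step s as n) (\<lambda>i. as (n + i))) (\<lambda>i. as (n + i))"
    unfolding cum_cost_def run_add[symmetric] by (simp only: add.commute)
  have "cum_cost gam c (run step s as) as =
      (\<Sum>k<n. gam ^ k * c (run step s as k) (as k))
      + gam ^ n * (\<Sum>t. gam ^ t * c (run step s as (t + n)) (as (t + n)))"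
    unfolding cum_cost_def using gam_pos by (intro suminf_discounted_split summable_cost) simp
  then show ?thesis unfolding tail .
qed

lemma VC_le_cum_cost: "VC step c gam s \<le> cum_cost gam c (run step s as) as"
  unfolding VC_def by (rule cINF_lower) (auto intro!: bdd_belowI[where m = 0] cum_cost_nonneg)

lemma VC_nonneg: "0 \<le> VC step c gam s"
  unfolding VC_def by (rule cINF_greatest) (auto intro!: cum_cost_nonneg)

lemma QC_le_cum_cost: "QC step c gam s (as 0) \<le> cum_cost gam c (run step s as) as"
  unfolding QC_def by (rule cINF_lower) (auto intro!: bdd_belowI[where m = 0] cum_cost_nonneg)

lemma QC_ge_Bellman: "c s a + gam * VC step c gam (step s a) \<le> QC step c gam s a"
  unfolding QC_def
proof (rule cINF_greatest)
  show "{as. as 0 = a} \<noteq> {}" by auto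
  fix as :: "nat \<Rightarrow> 'a"
  assume "as \<in> {as. as 0 = a}"
  then have "cum_cost gam c (run step s as) as =
      c s a + gam * cum_cost gam c (run step (step s a) (\<lambda>i. as (Suc i))) (\<lambda>i. as (Suc i))"
    using cum_cost_run_split[of s as 1] by simp
  then show "c s a + gam * VC step c gam (step s a) \<le> cum_cost gam c (run step s as) as"
    using VC_le_cum_cost gam_pos by (simp add: mult_left_mono)
qed

lemma Pi_P_traj_VC_le_budget:
  assumes "VC step c gam s0 \<le> dbar" "in_Pi_P step c gam s0 dbar pol"
    and traj: "bamdp_traj step c gam s0 dbar pol ss ds as"
  shows "VC step c gam (ss t) \<le> ds t"
proof (cases t)
  case 0
  then show ?thesis using assms unfolding bamdp_traj_def by simp
next
  case (Suc n)
  have "0 < pmf (pol (ss n, ds n)) (as n)"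
    and next_state: "ss (Suc n) = step (ss n) (as n)"
    and next_budget: "ds (Suc n) = (ds n - c (ss n) (as n)) / gam"
    using traj unfolding bamdp_traj_def by auto
  then have safe: "QC step c gam (ss n) (as n) \<le> ds n"
    using assms(2) traj unfolding in_Pi_P_def A_P_def by blast
  have "gam * VC step c gam (ss (Suc n)) \<le> ds n - c (ss n) (as n)"
    using QC_ge_Bellman[of "ss n" "as n"] safe next_state by simp
  then show ?thesis
    using Suc next_budget gam_pos by (simp add: pos_le_divide_eq mult.commute)
qed

lemma Pi_P_traj_in_S_P:
  assumes "VC step c gam s0 \<le> dbar" "in_Pi_P step c gam s0 dbar pol"
    and "bamdp_traj step c gam s0 dbar pol ss ds as"
  shows "(ss t, ds t) \<in> S_P step c gam"
  using Pi_P_traj_VC_le_budget[OF assms, of t] VC_nonneg[of "ss t"] unfolding S_P_def by simp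

lemma Pi_P_traj_cum_cost_le:
  assumes "VC step c gam s0 \<le> dbar" "in_Pi_P step c gam s0 dbar pol"
    and traj: "bamdp_traj step c gam s0 dbar pol ss ds as"
  shows "cum_cost gam c ss as \<le> dbar"
  unfolding cum_cost_def
proof (rule suminf_le_const[OF summable_cost])
  fix n
  have "0 \<le> ds n"
    using Pi_P_traj_VC_le_budget[OF assms, of n] VC_nonneg[of "ss n"] by simp
  then show "(\<Sum>t<n. gam ^ t * c (ss t) (as t)) \<le> dbar"
    using bamdp_traj_budget[OF traj, of n] gam_pos by simp
qed

lemma traj_cum_cost_le_imp_QC_le_budget:
  assumes traj: "bamdp_traj step c gam s0 dbar pol ss ds as"
    and "cum_cost gam c ss as \<le> dbar"
  shows "QC step c gam (ss t) (as t) \<le> ds t"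
proof -
  let ?tail = "cum_cost gam c (run step (ss t) (\<lambda>i. as (t + i))) (\<lambda>i. as (t + i))"
  have "ss = run step s0 as"
    using bamdp_traj_run[OF traj] by blast
  then have "cum_cost gam c ss as = (\<Sum>k<t. gam ^ k * c (ss k) (as k)) + gam ^ t * ?tail"
    using cum_cost_run_split[of s0 as t] by simp
  then have "gam ^ t * ?tail \<le> gam ^ t * ds t"
    using assms bamdp_traj_budget[OF traj, of t] gam_pos by simp
  then have "?tail \<le> ds t" using gam_pos by simp
  then show ?thesis using QC_le_cum_cost[of "ss t" "\<lambda>i. as (t + i)"] by simp
qed

lemma deterministic_cum_cost_le_imp_Pi_P:
  assumes traj: "bamdp_traj step c gam s0 dbar (\<lambda>x. return_pmf (pol x)) ss ds as"
    and "cum_cost gam c ss as \<le> dbar"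
  shows "in_Pi_P step c gam s0 dbar (\<lambda>x. return_pmf (pol x))"
  unfolding in_Pi_P_def
proof (intro allI impI)
  fix ss' ds' as' t a
  assume traj': "bamdp_traj step c gam s0 dbar (\<lambda>x. return_pmf (pol x)) ss' ds' as'"
    and "0 < pmf (return_pmf (pol (ss' t, ds' t))) a"
  then have "a = pol (ss' t, ds' t)"
    by (simp only: pmf_return_pos_iff)
  then have "ss' = ss" "ds' = ds" "a = as t"
    using bamdp_traj_return_pmf_unique[OF traj traj'] bamdp_traj_return_pmf_actions[OF traj]
    by simp_all
  then show "a \<in> A_P step c gam (ss' t) (ds' t)"
    using traj_cum_cost_le_imp_QC_le_budget[OF assms] unfolding A_P_def by simp
qed

end

theorem theorem2:
  fixes step :: "'s \<Rightarrow> 'a \<Rightarrow> 's" and c :: "'s \<Rightarrow> 'a \<Rightarrow> real"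
    and gam cmax dbar :: real and s0 :: 's
  assumes "0 < gam" "gam < 1"
    and "\<And>s a. 0 \<le> c s a \<and> c s a \<le> cmax"
    and "VC step c gam s0 \<le> dbar"
  shows
    "(\<forall>pol ss ds as. in_Pi_P step c gam s0 dbar pol \<longrightarrow>
        bamdp_traj step c gam s0 dbar pol ss ds as \<longrightarrow>
        (\<forall>t. (ss t, ds t) \<in> S_P step c gam))
   \<and> (\<forall>(pol :: 's \<times> real \<Rightarrow> 'a) ss ds as.
        bamdp_traj step c gam s0 dbar (\<lambda>x. return_pmf (pol x)) ss ds as \<longrightarrow>
        cum_cost gam c ss as \<le> dbar \<longrightarrow>
        in_Pi_P step c gam s0 dbar (\<lambda>x. return_pmf (pol x)))
   \<and> (\<forall>pol ss ds as. in_Pi_P step c gam s0 dbar pol \<longrightarrow>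
        bamdp_traj step c gam s0 dbar pol ss ds as \<longrightarrow>
        cum_cost gam c ss as \<le> dbar)"
proof -
  interpret discounted_cmdp step c gam cmax
    using assms(1-3) by unfold_locales
  show ?thesis
    using Pi_P_traj_in_S_P[OF assms(4)] deterministic_cum_cost_le_imp_Pi_P
      Pi_P_traj_cum_cost_le[OF assms(4)]
    by blast
qed

end
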